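(* Under the standing assumptions described in the context, there is a constant $C>0$ independent of $\varepsilon$ such that $$\mathrm d_\varepsilon(\mathcal A_\varepsilon,E_\varepsilon\mathcal A_0)\le C(\tau(\varepsilon)+\rho(\varepsilon))+\mathrm d_\varepsilon(Q_\varepsilon\mathcal A_\varepsilon,E_\varepsilon\mathcal A_0).$$
   Context: Fix $\alpha\in(0,1)$, $\varepsilon_0>0$. $X_0$ is a real Hilbert space of finite dimension $n$, $A_0:X_0\to X_0$ an invertible bounded linear operator with spectrum $\{\lambda_1^0<\cdots<\lambda_n^0\}$, $\lambda_1^0>0$. For $\varepsilon\in(0,\varepsilon_0]$, $X_\varepsilon$ is a separable Hilbert space and $A_\varepsilon$ a positive self-adjoint invertible operator in $X_\varepsilon$ with compact resolvent, distinct eigenvalues $0<\lambda_1^\varepsilon<\lambda_2^\varepsilon<\cdots$, orthonormal eigenfunctions $\varphi_j^\varepsilon$; $X_\varepsilon^\alpha=D(A_\varepsilon^\alpha)$ with $\|u\|_{X_\varepsilon^\alpha}=\|A_\varepsilon^\alpha u\|_{X_\varepsilon}$. Bounded linear maps $E_\varepsilon:X_0\to X_\varepsilon^\alpha$, $M_\varepsilon:X_\varepsilon\to X_0$ satisfy $M_\varepsilon E_\varepsilon=I$, $\|E_\varepsilon u\|_{X_\varepsilon}\to\|u\|_{X_0}$, with norms bounded independently of $\varepsilon$. $A_\varepsilon^{-1}$ converges compactly to $A_0^{-1}$ (E-convergence $u^\varepsilon\to u^0$, meaning $\|u^\varepsilon-E_\varepsilon u^0\|_{X_\varepsilon^\alpha}\to0$,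 is preserved by the resolvents, and images of unit-norm families under $A_\varepsilon^{-1}$ are relatively compact for this convergence). Increasing $\tau,\rho$ with $\tau(0)=\rho(0)=0$ satisfy $\|A_\varepsilon^{-1}-E_\varepsilon A_0^{-1}M_\varepsilon\|_{\mathcal L(X_\varepsilon,X_\varepsilon^\alpha)}\le\tau(\varepsilon)$ and $\|f_\varepsilon(u^\varepsilon)-E_\varepsilon f_0(u^0)\|_{X_\varepsilon}\le C\|u^\varepsilon-E_\varepsilon u^0\|_{X_\varepsilon^\alpha}+\rho(\varepsilon)$, where $f_0:X_0\to X_0$, $f_\varepsilon:X_\varepsilon^\alpha\to X_\varepsilon$ are $C^1$, uniformly bounded, uniformly Lipschitz. $\mathcal A_\varepsilon$ is the global attractor (uniformly bounded in $X_\varepsilon^\alpha$) of the semigroup generated by $u_t+A_\varepsilon u=f_\varepsilon(u)$ in $X_\varepsilon^\alpha$, and $\mathcal A_0$ that of $\dot u+A_0u=f_0(u)$ in $X_0$. $Q_\varepsilon$ is the orthogonal projection of $X_\varepsilon$ onto $\mathrm{span}[\varphi_1^\varepsilon,\dots,\varphi_n^\varepsilon]$ (equivalently the Riesz spectral projection of $A_\varepsilon$ associated with a contour enclosing $-\lambda_1^0,\dots,-\lambda_n^0$ for $-A_\varepsilon$). $\mathrm d_\varepsilon$ is the symmetric Hausdorff distance in $X_\varepsilon^\alpha$: $\mathrm d_\varepsilon(A,B)=\max\{\sup_{a\in A}\inf_{b\in B}\|a-b\|_{X_\varepsilon^\alpha},\sup_{b\in B}\inf_{a\in A}\|a-b\|_{X_\varepsilon^\alpha}\}$.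 *)

theory Defs
  imports "HOL-Analysis.Analysis"
begin

text \<open>Spectral data of a positive self-adjoint operator with compact resolvent in a
separable Hilbert space: eigenvalues lam 0 < lam 1 < ... (tending to infinity) and a
complete orthonormal system of eigenvectors p 0, p 1, ... . The operator and its
fractional powers are given by their spectral expansions.\<close>

definition orthonormal_basis_seq :: "(nat \<Rightarrow> 'b::real_inner) \<Rightarrow> bool" where
  "orthonormal_basis_seq p \<longleftrightarrow>
     (\<forall>i j. p i \<bullet> p j = (if i = j then 1 else 0)) \<and>
     (\<forall>u. (\<lambda>j. (u \<bullet> p j) *\<^sub>R p j) sums u)"

definition in_Xalpha :: "(nat \<Rightarrow> real) \<Rightarrow> (nat \<Rightarrow> 'b::real_inner) \<Rightarrow> real \<Rightarrow> 'b \<Rightarrow> bool" where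
  "in_Xalpha lam p a u \<longleftrightarrow> summable (\<lambda>j. (lam j powr a * (u \<bullet> p j))\<^sup>2)"

definition alpha_norm :: "(nat \<Rightarrow> real) \<Rightarrow> (nat \<Rightarrow> 'b::real_inner) \<Rightarrow> real \<Rightarrow> 'b \<Rightarrow> real" where
  "alpha_norm lam p a u = sqrt (\<Sum>j. (lam j powr a * (u \<bullet> p j))\<^sup>2)"

definition op_inv :: "(nat \<Rightarrow> real) \<Rightarrow> (nat \<Rightarrow> 'b::real_inner) \<Rightarrow> 'b \<Rightarrow> 'b" where
  "op_inv lam p u = (\<Sum>j. (u \<bullet> p j / lam j) *\<^sub>R p j)"

definition op_sgrp :: "(nat \<Rightarrow> real) \<Rightarrow> (nat \<Rightarrow> 'b::real_inner) \<Rightarrow> real \<Rightarrow> 'b \<Rightarrow> 'b" where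
  "op_sgrp lam p t u = (\<Sum>j. (exp (- lam j * t) * (u \<bullet> p j)) *\<^sub>R p j)"

definition proj_first :: "(nat \<Rightarrow> 'b::real_inner) \<Rightarrow> nat \<Rightarrow> 'b \<Rightarrow> 'b" where
  "proj_first p n u = (\<Sum>j<n. (u \<bullet> p j) *\<^sub>R p j)"

definition hausd :: "('b::real_vector \<Rightarrow> real) \<Rightarrow> 'b set \<Rightarrow> 'b set \<Rightarrow> real" where
  "hausd N A B = max (SUP a\<in>A. INF b\<in>B. N (a - b)) (SUP b\<in>B. INF a\<in>A. N (a - b))"

definition C1_wrt :: "('b::real_normed_vector \<Rightarrow> bool) \<Rightarrow> ('b \<Rightarrow> real) \<Rightarrow> ('b \<Rightarrow> 'b) \<Rightarrow> bool" where
  "C1_wrt S N f \<longleftrightarrow> (\<exists>D :: 'b \<Rightarrow> 'b \<Rightarrow> 'b.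
     (\<forall>u. S u \<longrightarrow>
        linear (D u) \<and> (\<exists>K. \<forall>h. S h \<longrightarrow> norm (D u h) \<le> K * N h) \<and>
        (\<forall>e>0. \<exists>d>0. \<forall>h. S h \<and> N h < d \<longrightarrow> norm (f (u + h) - f u - D u h) \<le> e * N h)) \<and>
     (\<forall>u. S u \<longrightarrow> (\<forall>e>0. \<exists>d>0. \<forall>v. S v \<and> N (v - u) < d \<longrightarrow>
        (\<forall>h. S h \<longrightarrow> norm (D v h - D u h) \<le> e * N h))))"

text \<open>Mild solution of u_t + A u = f(u) in X^alpha on [0,infinity) with u(0) = u0
(variation of constants formula).\<close>
definition mild_sol :: "(nat \<Rightarrow> real) \<Rightarrow> (nat \<Rightarrow> 'b::{real_inner,complete_space}) \<Rightarrow> real \<Rightarrow>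
    ('b \<Rightarrow> 'b) \<Rightarrow> 'b \<Rightarrow> (real \<Rightarrow> 'b) \<Rightarrow> bool" where
  "mild_sol lam p a f u0 u \<longleftrightarrow>
     u 0 = u0 \<and> (\<forall>t\<ge>0. in_Xalpha lam p a (u t)) \<and>
     (\<forall>t\<ge>0. \<forall>e>0. \<exists>d>0. \<forall>s\<ge>0. \<bar>s - t\<bar> < d \<longrightarrow> alpha_norm lam p a (u s - u t) < e) \<and>
     (\<forall>t\<ge>0. ((\<lambda>s. op_sgrp lam p (t - s) (f (u s))) has_integral (u t - op_sgrp lam p t u0)) {0..t})"

definition ode_sol :: "('a::real_normed_vector \<Rightarrow> 'a) \<Rightarrow> ('a \<Rightarrow> 'a) \<Rightarrow> 'a \<Rightarrow> (real \<Rightarrow> 'a) \<Rightarrow> bool" where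
  "ode_sol A0 f0 u0 u \<longleftrightarrow>
     u 0 = u0 \<and> (\<forall>t\<ge>0. (u has_vector_derivative (f0 (u t) - A0 (u t))) (at t within {0..}))"

definition global_attractor :: "('x::real_vector \<Rightarrow> real) \<Rightarrow> ('x \<Rightarrow> bool) \<Rightarrow>
    ('x \<Rightarrow> (real \<Rightarrow> 'x) \<Rightarrow> bool) \<Rightarrow> 'x set \<Rightarrow> bool" where
  "global_attractor N S sol A \<longleftrightarrow>
     (\<forall>u0. S u0 \<longrightarrow> (\<exists>u. sol u0 u) \<and>
        (\<forall>u v. sol u0 u \<and> sol u0 v \<longrightarrow> (\<forall>t\<ge>0. u t = v t))) \<and>
     A \<subseteq> Collect S \<and>
     (\<forall>x :: nat \<Rightarrow> 'x. (\<forall>k. x k \<in> A) \<longrightarrow>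
        (\<exists>r a. strict_mono r \<and> a \<in> A \<and> (\<lambda>k. N (x (r k) - a)) \<longlonglongrightarrow> 0)) \<and>
     (\<forall>a\<in>A. \<forall>u. sol a u \<longrightarrow> (\<forall>t\<ge>0. u t \<in> A)) \<and>
     (\<forall>a\<in>A. \<forall>t\<ge>0. \<exists>b\<in>A. \<exists>u. sol b u \<and> u t = a) \<and>
     (\<forall>B. B \<subseteq> Collect S \<and> (\<exists>K. \<forall>b\<in>B. N b \<le> K) \<longrightarrow>
        (\<forall>e>0. \<exists>T. \<forall>b\<in>B. \<forall>u. sol b u \<longrightarrow> (\<forall>t\<ge>T. \<exists>a\<in>A. N (u t - a) < e)))"

end

theory Submission
  imports Defs
begin

text \<open>
  Eigenvalues are indexed from 0, so \<open>lam e n\<close> is the first eigenvalue of \<open>A\<^sub>\<epsilon>\<close> beyond the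
  \<open>n\<close> that converge to the spectrum of \<open>A\<^sub>0\<close>.

  Every point \<open>a\<close> of the attractor is close to its projection onto the first \<open>n\<close> modes.
  By invariance, for each \<open>t \<ge> 0\<close> we have \<open>a = u t\<close> for a mild solution \<open>u\<close> starting in the
  bounded attractor. In the variation of constants formula the initial datum contributes at most
  \<open>exp (- lam n * t)\<close> times its norm to the high modes, while the bounded nonlinearity
  contributes, summed over the dyadic blocks \<open>2\<^sup>k lam n \<le> lam j < 2\<^sup>k\<^sup>+\<^sup>1 lam n\<close>, at most a
  constant times \<open>lam n powr (alpha - 1)\<close>. Letting \<open>t \<rightarrow> \<infinity>\<close> bounds the high-mode part of \<open>a\<close> by
  \<open>C * lam n powr (alpha - 1)\<close>.

  On the other hand \<open>lam n powr (alpha - 1) \<le> tau e\<close>: since \<open>dim X\<^sub>0 = n\<close>, some nonzero \<open>w\<close> in the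
  span of the first \<open>n + 1\<close> eigenvectors has \<open>M\<^sub>\<epsilon> w = 0\<close>, so the resolvent estimate gives
  \<open>\<parallel>A\<^sub>\<epsilon>\<^sup>-\<^sup>1 w\<parallel>\<^sub>\<alpha> \<le> tau e * \<parallel>w\<parallel>\<close>, whereas the spectral expansion gives
  \<open>\<parallel>A\<^sub>\<epsilon>\<^sup>-\<^sup>1 w\<parallel>\<^sub>\<alpha> \<ge> lam n powr (alpha - 1) * \<parallel>w\<parallel>\<close>. Replacing the attractor by its projection
  thus moves the Hausdorff distance by at most \<open>C * tau e\<close>.
\<close>

locale orthonormal_seq =
  fixes p :: "nat \<Rightarrow> 'b::real_inner"
  assumes inner_p: "p i \<bullet> p j = (if i = j then 1 else 0)"
begin

lemma inner_sum_p:
  assumes "finite F"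
  shows "(\<Sum>j\<in>F. c j *\<^sub>R p j) \<bullet> p k = (if k \<in> F then c k else 0)"
proof -
  have "(\<Sum>j\<in>F. c j *\<^sub>R p j) \<bullet> p k = (\<Sum>j\<in>F. if j = k then c k else 0)"
    unfolding inner_sum_left by (intro sum.cong) (auto simp: inner_p)
  then show ?thesis
    using assms by simp
qed

lemma norm_sum_p_sq:
  assumes "finite F"
  shows "(norm (\<Sum>j\<in>F. c j *\<^sub>R p j))\<^sup>2 = (\<Sum>j\<in>F. (c j)\<^sup>2)"
proof -
  let ?y = "\<Sum>j\<in>F. c j *\<^sub>R p j"
  have "(norm ?y)\<^sup>2 = (\<Sum>j\<in>F. c j * (?y \<bullet> p j))"
    by (simp add: power2_norm_eq_inner inner_sum_left inner_commute)
  also have "\<dots> = (\<Sum>j\<in>F. (c j)\<^sup>2)"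
    using assms by (intro sum.cong) (auto simp: inner_sum_p power2_eq_square)
  finally show ?thesis .
qed

lemma bessel_inequality:
  assumes "finite F"
  shows "(\<Sum>j\<in>F. (x \<bullet> p j)\<^sup>2) \<le> (norm x)\<^sup>2"
proof -
  let ?y = "\<Sum>j\<in>F. (x \<bullet> p j) *\<^sub>R p j"
  have xy: "x \<bullet> ?y = (\<Sum>j\<in>F. (x \<bullet> p j)\<^sup>2)"
    by (simp add: inner_sum_right power2_eq_square)
  have yy: "?y \<bullet> ?y = (\<Sum>j\<in>F. (x \<bullet> p j)\<^sup>2)"
    using norm_sum_p_sq[OF assms, of "\<lambda>j. x \<bullet> p j"] by (simp add: power2_norm_eq_inner)
  have "0 \<le> (x - ?y) \<bullet> (x - ?y)" by simp
  also have "\<dots> = x \<bullet> x - 2 * (x \<bullet> ?y) + ?y \<bullet> ?y"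
    by (simp add: algebra_simps inner_commute)
  finally show ?thesis
    using xy yy by (simp add: power2_norm_eq_inner)
qed

lemma summable_inner_p_sq: "summable (\<lambda>j. (x \<bullet> p j)\<^sup>2)"
  using bessel_inequality by (intro summableI_nonneg_bounded) auto

lemma inner_proj_first: "proj_first p n u \<bullet> p j = (if j < n then u \<bullet> p j else 0)"
  unfolding proj_first_def by (simp add: inner_sum_p)

end

lemma orthonormal_basis_seq_imp_orthonormal_seq:
  "orthonormal_basis_seq p \<Longrightarrow> orthonormal_seq p"
  by (simp add: orthonormal_basis_seq_def orthonormal_seq_def)

(* The library's summable_Cauchy is stated for the class banach, which the sort
   {real_normed_vector, complete_space} of the statement does not provide. *)
lemma summable_Cauchy_complete:
  fixes f :: "nat \<Rightarrow> 'a::{real_normed_vector,complete_space}"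
  assumes "\<And>e. e > 0 \<Longrightarrow> \<exists>N. \<forall>m\<ge>N. \<forall>n. norm (sum f {m..<n}) < e"
  shows "summable f"
  unfolding summable_iff_convergent Cauchy_convergent_iff [symmetric]
proof (rule CauchyI)
  fix e :: real
  assume "0 < e"
  with assms obtain N where N: "\<And>m n. m \<ge> N \<Longrightarrow> norm (sum f {m..<n}) < e"
    by blast
  have "norm (sum f {..<m} - sum f {..<n}) < e" if "m \<ge> N" "n \<ge> N" "n \<le> m" for m n
    using N[of n m] that by (simp add: sum_diff[symmetric])
  then show "\<exists>M. \<forall>m\<ge>M. \<forall>n\<ge>M. norm (sum f {..<m} - sum f {..<n}) < e"
    by (metis nle_le norm_minus_commute)
qed

lemma inner_suminf_orthonormal:
  fixes p :: "nat \<Rightarrow> 'b::{real_inner,complete_space}"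
  assumes p: "orthonormal_seq p" and d: "\<And>j. \<bar>d j\<bar> \<le> \<bar>x \<bullet> p j\<bar>"
  shows "(\<Sum>j. d j *\<^sub>R p j) \<bullet> p k = d k"
proof -
  interpret orthonormal_seq p by (fact p)
  have summable: "summable (\<lambda>j. d j *\<^sub>R p j)"
  proof (rule summable_Cauchy_complete)
    fix e :: real assume e: "e > 0"
    obtain N where N: "\<And>m n. m \<ge> N \<Longrightarrow> norm (\<Sum>j\<in>{m..<n}. (x \<bullet> p j)\<^sup>2) < e\<^sup>2"
      using summable_inner_p_sq[unfolded summable_Cauchy] e by (metis zero_less_power)
    have "norm (\<Sum>j\<in>{m..<n}. d j *\<^sub>R p j) < e" if "m \<ge> N" for m n
    proof -
      have "(norm (\<Sum>j\<in>{m..<n}. d j *\<^sub>R p j))\<^sup>2 = (\<Sum>j\<in>{m..<n}. (d j)\<^sup>2)"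
        by (simp add: norm_sum_p_sq)
      also have "\<dots> \<le> (\<Sum>j\<in>{m..<n}. (x \<bullet> p j)\<^sup>2)"
        by (intro sum_mono) (metis abs_ge_zero d power2_abs power_mono)
      also have "\<dots> < e\<^sup>2"
        using N[OF that, of n] by (simp add: sum_nonneg)
      finally show ?thesis
        using e by (meson norm_ge_zero power_less_imp_less_base less_imp_le)
    qed
    then show "\<exists>N. \<forall>m\<ge>N. \<forall>n. norm (\<Sum>j\<in>{m..<n}. d j *\<^sub>R p j) < e"
      by blast
  qed
  have "(\<lambda>j. (d j *\<^sub>R p j) \<bullet> p k) sums ((\<Sum>j. d j *\<^sub>R p j) \<bullet> p k)"
    by (rule bounded_linear.sums[OF bounded_linear_inner_left summable_sums[OF summable]])
  moreover have "(\<lambda>j. (d j *\<^sub>R p j) \<bullet> p k) = (\<lambda>j. if j = k then d j else 0)"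
    by (auto simp: inner_p)
  ultimately show ?thesis
    using sums_single[of k d] sums_unique2 by metis
qed

lemma inner_op_sgrp:
  fixes p :: "nat \<Rightarrow> 'b::{real_inner,complete_space}"
  assumes "orthonormal_seq p" "0 \<le> t" "\<And>j. 0 \<le> lam j"
  shows "op_sgrp lam p t x \<bullet> p k = exp (- lam k * t) * (x \<bullet> p k)"
  unfolding op_sgrp_def
proof (rule inner_suminf_orthonormal[OF assms(1)])
  fix j
  have "exp (- lam j * t) \<le> 1"
    using assms by simp
  then show "\<bar>exp (- lam j * t) * (x \<bullet> p j)\<bar> \<le> \<bar>x \<bullet> p j\<bar>"
    by (simp add: abs_mult mult_left_le_one_le)
qed

lemma l2_triangle:
  fixes x y :: "nat \<Rightarrow> real"
  assumes x: "summable (\<lambda>j. (x j)\<^sup>2)" and y: "summable (\<lambda>j. (y j)\<^sup>2)"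
  shows "summable (\<lambda>j. (x j + y j)\<^sup>2)"
    and "sqrt (\<Sum>j. (x j + y j)\<^sup>2) \<le> sqrt (\<Sum>j. (x j)\<^sup>2) + sqrt (\<Sum>j. (y j)\<^sup>2)"
proof -
  have le: "(x j + y j)\<^sup>2 \<le> 2 * (x j)\<^sup>2 + 2 * (y j)\<^sup>2" for j
    by (smt (verit) zero_le_power2 power2_diff power2_sum)
  show xy: "summable (\<lambda>j. (x j + y j)\<^sup>2)"
    by (rule summable_comparison_test[of _ "\<lambda>j. 2 * (x j)\<^sup>2 + 2 * (y j)\<^sup>2"])
      (use le x y in \<open>auto intro!: summable_add summable_mult\<close>)
  let ?A = "sqrt (\<Sum>j. (x j)\<^sup>2)" and ?B = "sqrt (\<Sum>j. (y j)\<^sup>2)"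
  have bound: "(\<Sum>j. (x j + y j)\<^sup>2) \<le> (?A + ?B)\<^sup>2"
  proof (rule suminf_le_const[OF xy])
    fix n
    have "L2_set (\<lambda>j. x j + y j) {..<n} \<le> L2_set x {..<n} + L2_set y {..<n}"
      by (rule L2_set_triangle_ineq)
    also have "\<dots> \<le> ?A + ?B"
      unfolding L2_set_def using x y
      by (intro add_mono real_sqrt_le_mono sum_le_suminf) auto
    finally have "sqrt (\<Sum>j<n. (x j + y j)\<^sup>2) \<le> ?A + ?B"
      unfolding L2_set_def .
    then show "(\<Sum>j<n. (x j + y j)\<^sup>2) \<le> (?A + ?B)\<^sup>2"
      by (rule sqrt_le_D)
  qed
  show "sqrt (\<Sum>j. (x j + y j)\<^sup>2) \<le> ?A + ?B"
    by (rule real_le_lsqrt[OF _ bound]) (simp add: x y suminf_nonneg)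
qed

lemma in_Xalpha_0: "in_Xalpha lam p a 0"
  unfolding in_Xalpha_def by simp

lemma in_Xalpha_uminus: "in_Xalpha lam p a (- u) = in_Xalpha lam p a u"
  unfolding in_Xalpha_def by (simp add: power2_eq_square)

lemma in_Xalpha_add:
  "in_Xalpha lam p a u \<Longrightarrow> in_Xalpha lam p a v \<Longrightarrow> in_Xalpha lam p a (u + v)"
  unfolding in_Xalpha_def
  using l2_triangle(1)[of "\<lambda>j. lam j powr a * (u \<bullet> p j)" "\<lambda>j. lam j powr a * (v \<bullet> p j)"]
  by (simp add: inner_add_left distrib_left)

lemma in_Xalpha_diff:
  "in_Xalpha lam p a u \<Longrightarrow> in_Xalpha lam p a v \<Longrightarrow> in_Xalpha lam p a (u - v)"
  using in_Xalpha_add[of lam p a u "- v"] by (simp add: in_Xalpha_uminus)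

lemma alpha_norm_uminus: "alpha_norm lam p a (- u) = alpha_norm lam p a u"
  unfolding alpha_norm_def by (simp add: power2_eq_square)

lemma alpha_norm_nonneg: "in_Xalpha lam p a u \<Longrightarrow> 0 \<le> alpha_norm lam p a u"
  unfolding alpha_norm_def in_Xalpha_def by (simp add: suminf_nonneg)

lemma alpha_norm_sq:
  "in_Xalpha lam p a u \<Longrightarrow> (alpha_norm lam p a u)\<^sup>2 = (\<Sum>j. (lam j powr a * (u \<bullet> p j))\<^sup>2)"
  unfolding alpha_norm_def in_Xalpha_def by (simp add: suminf_nonneg)

lemma alpha_norm_triangle:
  "in_Xalpha lam p a u \<Longrightarrow> in_Xalpha lam p a v \<Longrightarrow>
   alpha_norm lam p a (u + v) \<le> alpha_norm lam p a u + alpha_norm lam p a v"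
  unfolding in_Xalpha_def alpha_norm_def
  using l2_triangle(2)[of "\<lambda>j. lam j powr a * (u \<bullet> p j)" "\<lambda>j. lam j powr a * (v \<bullet> p j)"]
  by (simp add: inner_add_left distrib_left)

lemma alpha_norm_diff_le:
  "in_Xalpha lam p a u \<Longrightarrow> in_Xalpha lam p a v \<Longrightarrow>
   alpha_norm lam p a (u - v) \<le> alpha_norm lam p a u + alpha_norm lam p a v"
  using alpha_norm_triangle[of lam p a u "- v"] by (simp add: in_Xalpha_uminus alpha_norm_uminus)

lemma alpha_norm_diff_triangle:
  "in_Xalpha lam p a u \<Longrightarrow> in_Xalpha lam p a v \<Longrightarrow> in_Xalpha lam p a w \<Longrightarrow>
   alpha_norm lam p a (u - w) \<le> alpha_norm lam p a (u - v) + alpha_norm lam p a (v - w)"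
  using alpha_norm_triangle[of lam p a "u - v" "v - w"] in_Xalpha_diff by fastforce

lemma alpha_norm_le_of_partial_sums:
  assumes "in_Xalpha lam p a u" "0 \<le> B"
    and "\<And>m. (\<Sum>j<m. (lam j powr a * (u \<bullet> p j))\<^sup>2) \<le> B\<^sup>2"
  shows "alpha_norm lam p a u \<le> B"
proof -
  have "(alpha_norm lam p a u)\<^sup>2 \<le> B\<^sup>2"
    using assms unfolding alpha_norm_sq[OF assms(1)] in_Xalpha_def by (intro suminf_le_const)
  then show ?thesis
    using assms(2) alpha_norm_nonneg[OF assms(1)] by (simp add: power2_le_iff_abs_le)
qed

lemma
  assumes "finite F" "\<And>j. j \<notin> F \<Longrightarrow> u \<bullet> p j = 0"
  shows in_Xalpha_finite_support: "in_Xalpha lam p a u"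
    and alpha_norm_finite_support_sq:
      "(alpha_norm lam p a u)\<^sup>2 = (\<Sum>j\<in>F. (lam j powr a * (u \<bullet> p j))\<^sup>2)"
proof -
  have s: "(\<lambda>j. (lam j powr a * (u \<bullet> p j))\<^sup>2) sums (\<Sum>j\<in>F. (lam j powr a * (u \<bullet> p j))\<^sup>2)"
    using assms by (intro sums_finite) auto
  then show u: "in_Xalpha lam p a u"
    unfolding in_Xalpha_def by (rule sums_summable)
  show "(alpha_norm lam p a u)\<^sup>2 = (\<Sum>j\<in>F. (lam j powr a * (u \<bullet> p j))\<^sup>2)"
    using alpha_norm_sq[OF u] sums_unique[OF s] by simp
qed

lemma op_inv_finite_support:
  assumes "finite F" "\<And>j. j \<notin> F \<Longrightarrow> x \<bullet> p j = 0"
  shows "op_inv lam p x = (\<Sum>j\<in>F. (x \<bullet> p j / lam j) *\<^sub>R p j)"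
  unfolding op_inv_def using assms by (intro suminf_finite) auto

context orthonormal_seq
begin

lemma in_Xalpha_proj_first: "in_Xalpha lam p a (proj_first p n u)"
  by (rule in_Xalpha_finite_support[of "{..<n}"]) (auto simp: inner_proj_first)

lemma alpha_norm_proj_first_le:
  assumes "in_Xalpha lam p a u"
  shows "alpha_norm lam p a (proj_first p n u) \<le> alpha_norm lam p a u"
proof -
  have "(alpha_norm lam p a (proj_first p n u))\<^sup>2 = (\<Sum>j<n. (lam j powr a * (u \<bullet> p j))\<^sup>2)"
    by (subst alpha_norm_finite_support_sq[of "{..<n}"]) (auto simp: inner_proj_first)
  also have "\<dots> \<le> (\<Sum>j. (lam j powr a * (u \<bullet> p j))\<^sup>2)"
    using assms unfolding in_Xalpha_def by (intro sum_le_suminf) auto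
  also have "\<dots> = (alpha_norm lam p a u)\<^sup>2"
    using alpha_norm_sq[OF assms] by simp
  finally show ?thesis
    using alpha_norm_nonneg[OF assms] by (simp add: power2_le_iff_abs_le)
qed

end

section \<open>The spectral gap\<close>

lemma exists_nontrivial_linear_relation:
  fixes v :: "nat \<Rightarrow> 'a::euclidean_space"
  assumes "DIM('a) \<le> n"
  obtains c where "\<exists>j\<le>n. c j \<noteq> 0" "(\<Sum>j\<le>n. c j *\<^sub>R v j) = 0"
proof (cases "inj_on v {..n}")
  case True
  have "dependent (v ` {..n})"
    using assms by (intro dependent_biggerset) (simp add: card_image[OF True])
  then obtain u where "\<exists>w\<in>v ` {..n}. u w \<noteq> 0" "(\<Sum>w\<in>v ` {..n}. u w *\<^sub>R w) = 0"
    using dependent_finite by blast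
  then show ?thesis
    using that[of "u \<circ> v"] by (auto simp: sum.reindex[OF True])
next
  case False
  then obtain i j where ij: "i \<le> n" "j \<le> n" "i \<noteq> j" "v i = v j"
    by (auto simp: inj_on_def)
  let ?c = "\<lambda>k. if k = i then 1 else if k = j then -1 else (0::real)"
  have "(\<Sum>k\<le>n. ?c k *\<^sub>R v k) = (\<Sum>k\<le>n. (if k = i then v i else 0) - (if k = j then v j else 0))"
    using ij by (intro sum.cong) auto
  also have "\<dots> = 0"
    using ij by (simp add: sum_subtractf)
  finally show ?thesis
    using ij by (intro that[of ?c]) (auto intro!: exI[of _ i])
qed

lemma pos_of_strict_mono: "strict_mono lam \<Longrightarrow> 0 < (lam::nat \<Rightarrow> real) 0 \<Longrightarrow> 0 < lam j"
  by (metis le0 less_le_trans strict_mono_less_eq)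

lemma alpha_norm_op_inv_span_ge:
  fixes p :: "nat \<Rightarrow> 'b::real_inner" and c :: "nat \<Rightarrow> real" and n :: nat
  assumes p: "orthonormal_seq p" and lam: "strict_mono lam" "0 < lam 0" and "alpha < 1"
  defines "w \<equiv> \<Sum>j\<le>n. c j *\<^sub>R p j"
  shows "lam n powr (alpha - 1) * norm w \<le> alpha_norm lam p alpha (op_inv lam p w)"
proof -
  interpret orthonormal_seq p by (fact p)
  have lam_pos: "0 < lam j" for j
    using pos_of_strict_mono[OF lam] .
  define v where "v = op_inv lam p w"
  have v_coeff: "v \<bullet> p k = (if k \<le> n then c k / lam k else 0)" for k
    unfolding v_def w_def by (subst op_inv_finite_support[of "{..n}"]) (auto simp: inner_sum_p)
  have term_le: "(lam n powr (alpha - 1))\<^sup>2 * (c j)\<^sup>2 \<le> (lam j powr alpha * (v \<bullet> p j))\<^sup>2"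
    if "j \<le> n" for j
  proof -
    have "lam j powr alpha * (v \<bullet> p j) = lam j powr (alpha - 1) * c j"
      using that lam_pos[of j] by (simp add: v_coeff powr_diff)
    moreover have "lam n powr (alpha - 1) \<le> lam j powr (alpha - 1)"
      using \<open>alpha < 1\<close> lam_pos that lam(1)
      by (intro powr_mono2') (auto simp: strict_mono_less_eq)
    ultimately show ?thesis
      by (simp add: power_mult_distrib mult_right_mono power_mono)
  qed
  have "(lam n powr (alpha - 1) * norm w)\<^sup>2 = (\<Sum>j\<le>n. (lam n powr (alpha - 1))\<^sup>2 * (c j)\<^sup>2)"
    by (simp add: w_def power_mult_distrib norm_sum_p_sq sum_distrib_left)
  also have "\<dots> \<le> (\<Sum>j\<le>n. (lam j powr alpha * (v \<bullet> p j))\<^sup>2)"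
    by (intro sum_mono term_le) simp
  also have "\<dots> = (alpha_norm lam p alpha v)\<^sup>2"
    by (rule alpha_norm_finite_support_sq[symmetric]) (auto simp: v_coeff)
  finally show ?thesis
    unfolding v_def[symmetric]
    by (rule power2_le_imp_le[OF _ alpha_norm_nonneg[OF in_Xalpha_finite_support[of "{..n}"]]])
      (auto simp: v_coeff)
qed

lemma eigenvalue_powr_le_of_kernel_bound:
  fixes p :: "nat \<Rightarrow> 'b::real_inner" and M :: "'b \<Rightarrow> 'a::euclidean_space"
  assumes p: "orthonormal_seq p" and lam: "strict_mono lam" "0 < lam 0" and "alpha < 1"
    and M: "linear M" "DIM('a) \<le> n"
    and kernel: "\<And>u. M u = 0 \<Longrightarrow> alpha_norm lam p alpha (op_inv lam p u) \<le> T * norm u"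
  shows "lam n powr (alpha - 1) \<le> T"
proof -
  interpret orthonormal_seq p by (fact p)
  obtain c where c: "\<exists>j\<le>n. c j \<noteq> 0" "(\<Sum>j\<le>n. c j *\<^sub>R M (p j)) = 0"
    by (rule exists_nontrivial_linear_relation[OF M(2), of "\<lambda>j. M (p j)"])
  define w where "w = (\<Sum>j\<le>n. c j *\<^sub>R p j)"
  have "M w = 0"
    using c(2) by (simp add: w_def linear_sum[OF M(1)] linear_scale[OF M(1)])
  obtain j where "j \<le> n" "c j \<noteq> 0"
    using c(1) by blast
  then have "w \<bullet> p j \<noteq> 0"
    by (simp add: w_def inner_sum_p)
  then have "0 < norm w"
    by auto
  have "lam n powr (alpha - 1) * norm w \<le> alpha_norm lam p alpha (op_inv lam p w)"
    unfolding w_def using p lam \<open>alpha < 1\<close> by (rule alpha_norm_op_inv_span_ge)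
  also have "\<dots> \<le> T * norm w"
    by (rule kernel[OF \<open>M w = 0\<close>])
  finally show ?thesis
    using \<open>0 < norm w\<close> by simp
qed

lemma eigenvalue_powr_le_of_resolvent_estimate:
  fixes p :: "nat \<Rightarrow> 'b::real_inner" and M :: "'b \<Rightarrow> 'a::euclidean_space"
  assumes p: "orthonormal_seq p" and lam: "strict_mono lam" "0 < lam 0" and "alpha < 1"
    and M: "linear M" "DIM('a) \<le> n" and "linear E" "linear A0" "bij A0"
    and estimate: "\<And>u. alpha_norm lam p alpha (op_inv lam p u - E (inv A0 (M u))) \<le> T * norm u"
  shows "lam n powr (alpha - 1) \<le> T"
proof (rule eigenvalue_powr_le_of_kernel_bound[OF p lam \<open>alpha < 1\<close> M])
  have "inv A0 0 = 0"
    using \<open>linear A0\<close> \<open>bij A0\<close> by (metis bij_is_inj inv_f_f linear_0)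
  then show "alpha_norm lam p alpha (op_inv lam p u) \<le> T * norm u" if "M u = 0" for u
    using estimate[of u] that linear_0[OF \<open>linear E\<close>] by simp
qed

section \<open>High modes of mild solutions\<close>

definition dyadic_const :: "real \<Rightarrow> real" where
  "dyadic_const alpha = 4 powr alpha / (1 - 4 powr (alpha - 1))"

lemma four_powr: "(2 powr a)\<^sup>2 = (4::real) powr a"
  by (simp add: power2_eq_square powr_mult[symmetric])

lemma dyadic_const_nonneg: "alpha < 1 \<Longrightarrow> 0 \<le> dyadic_const alpha"
  unfolding dyadic_const_def using powr_less_one[of 4 "alpha - 1"] by simp

lemma dyadic_level:
  assumes "0 < L" "L \<le> x"
  shows "2 ^ nat \<lfloor>log 2 (x / L)\<rfloor> * L \<le> x" "x < 2 * (2 ^ nat \<lfloor>log 2 (x / L)\<rfloor> * L)"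
proof -
  have "0 \<le> \<lfloor>log 2 (x / L)\<rfloor>"
    using assms by simp
  then obtain k where k: "\<lfloor>log 2 (x / L)\<rfloor> = int k"
    using nonneg_int_cases by blast
  have "2 powr real k \<le> x / L \<and> x / L < 2 powr (real k + 1)"
    using k assms floor_log_eq_powr_iff[of "x / L" 2 "int k"] by simp
  then show "2 ^ nat \<lfloor>log 2 (x / L)\<rfloor> * L \<le> x" "x < 2 * (2 ^ nat \<lfloor>log 2 (x / L)\<rfloor> * L)"
    using k assms by (auto simp: powr_realpow powr_add field_simps)
qed

lemma dyadic_block_le:
  fixes lam d :: "'i \<Rightarrow> real"
  assumes x: "0 < x" and "0 \<le> alpha"
    and G: "\<And>j. j \<in> G \<Longrightarrow> x \<le> lam j \<and> lam j < 2 * x"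
    and block: "(\<Sum>j\<in>G. (d j)\<^sup>2) \<le> (K / x)\<^sup>2"
  shows "(\<Sum>j\<in>G. (lam j powr alpha * d j)\<^sup>2) \<le> 4 powr alpha * K\<^sup>2 * (x powr (alpha - 1))\<^sup>2"
proof -
  have "(\<Sum>j\<in>G. (lam j powr alpha * d j)\<^sup>2) \<le> (\<Sum>j\<in>G. ((2 * x) powr alpha)\<^sup>2 * (d j)\<^sup>2)"
  proof (intro sum_mono)
    fix j assume "j \<in> G"
    then have "lam j powr alpha \<le> (2 * x) powr alpha"
      using G[OF \<open>j \<in> G\<close>] x \<open>0 \<le> alpha\<close> by (intro powr_mono2) auto
    then show "(lam j powr alpha * d j)\<^sup>2 \<le> ((2 * x) powr alpha)\<^sup>2 * (d j)\<^sup>2"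
      by (simp add: power_mult_distrib mult_right_mono power_mono)
  qed
  also have "\<dots> \<le> ((2 * x) powr alpha)\<^sup>2 * (K / x)\<^sup>2"
    unfolding sum_distrib_left[symmetric] using block by (rule mult_left_mono) simp
  also have "\<dots> = 4 powr alpha * K\<^sup>2 * (x powr (alpha - 1))\<^sup>2"
    using x by (simp add: powr_mult powr_diff power_mult_distrib power_divide four_powr)
  finally show ?thesis .
qed

lemma dyadic_weighted_sum_le:
  fixes lam d :: "'i \<Rightarrow> real"
  assumes L: "0 < L" and alpha: "0 \<le> alpha" "alpha < 1" and J: "finite J"
    and lam_ge: "\<And>j. j \<in> J \<Longrightarrow> L \<le> lam j"
    and block: "\<And>G mu. G \<subseteq> J \<Longrightarrow> 0 < mu \<Longrightarrow> (\<And>j. j \<in> G \<Longrightarrow> mu \<le> lam j) \<Longrightarrow>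
      (\<Sum>j\<in>G. (d j)\<^sup>2) \<le> (K / mu)\<^sup>2"
  shows "(\<Sum>j\<in>J. (lam j powr alpha * d j)\<^sup>2) \<le> dyadic_const alpha * K\<^sup>2 * (L powr (alpha - 1))\<^sup>2"
proof -
  define level where "level j = nat \<lfloor>log 2 (lam j / L)\<rfloor>" for j
  define q where "q = 4 powr (alpha - 1)"
  define c where "c = 4 powr alpha * K\<^sup>2 * (L powr (alpha - 1))\<^sup>2"
  have q: "0 < q" "q < 1"
    using powr_less_one[of 4 "alpha - 1"] alpha by (auto simp: q_def)
  have level_block: "(\<Sum>j\<in>{j \<in> J. level j = k}. (lam j powr alpha * d j)\<^sup>2) \<le> c * q ^ k" for k
  proof -
    have "(\<Sum>j\<in>{j \<in> J. level j = k}. (lam j powr alpha * d j)\<^sup>2)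
        \<le> 4 powr alpha * K\<^sup>2 * ((2 ^ k * L) powr (alpha - 1))\<^sup>2"
      using L alpha(1) dyadic_level[OF L lam_ge]
      by (intro dyadic_block_le block) (auto simp: level_def)
    also have "(2 ^ k * L) powr (alpha - 1) = (2 powr (alpha - 1)) ^ k * L powr (alpha - 1)"
      using L by (simp add: powr_mult powr_realpow[symmetric] powr_powr powr_power mult.commute)
    also have "4 powr alpha * K\<^sup>2 * (\<dots>)\<^sup>2 = c * q ^ k"
      by (simp add: c_def q_def power_mult_distrib four_powr[symmetric] mult.commute flip: power_mult)
    finally show ?thesis .
  qed
  have "(\<Sum>j\<in>J. (lam j powr alpha * d j)\<^sup>2)
      = (\<Sum>k\<in>level ` J. \<Sum>j\<in>{j \<in> J. level j = k}. (lam j powr alpha * d j)\<^sup>2)"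
    using J by (intro sum.group[symmetric]) auto
  also have "\<dots> \<le> c * (\<Sum>k\<in>level ` J. q ^ k)"
    unfolding sum_distrib_left by (intro sum_mono level_block)
  also have "\<dots> \<le> c * (\<Sum>k. q ^ k)"
    using J q by (intro mult_left_mono sum_le_suminf) (auto simp: c_def)
  also have "\<dots> = dyadic_const alpha * K\<^sup>2 * (L powr (alpha - 1))\<^sup>2"
    using q by (simp add: suminf_geometric c_def q_def dyadic_const_def)
  finally show ?thesis .
qed

lemma has_integral_exp_decay:
  fixes mu t C :: real
  assumes "0 < mu" "0 \<le> t"
  shows "((\<lambda>s. C * exp (- mu * (t - s))) has_integral (C / mu - C / mu * exp (- mu * t))) {0..t}"
proof -
  have "((\<lambda>s. C / mu * exp (- mu * (t - s))) has_real_derivative C * exp (- mu * (t - s)))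
      (at s within {0..t})" for s
    using assms(1) by (auto intro!: derivative_eq_intros simp: field_simps)
  then show ?thesis
    using fundamental_theorem_of_calculus[OF assms(2), of "\<lambda>s. C / mu * exp (- mu * (t - s))"]
    by (simp add: has_real_derivative_iff_has_vector_derivative)
qed

lemma inner_op_sgrp_sum_le:
  fixes p :: "nat \<Rightarrow> 'b::{real_inner,complete_space}"
  assumes p: "orthonormal_seq p" and lam: "\<And>j. 0 \<le> lam j" and t: "0 \<le> t"
    and G: "finite G" and mu: "\<And>j. j \<in> G \<Longrightarrow> mu \<le> lam j"
  shows "op_sgrp lam p t x \<bullet> (\<Sum>j\<in>G. c j *\<^sub>R p j)
    \<le> exp (- mu * t) * norm x * norm (\<Sum>j\<in>G. c j *\<^sub>R p j)"
    (is "_ \<bullet> ?Y \<le> _")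
proof -
  interpret orthonormal_seq p by (fact p)
  define Z where "Z = (\<Sum>j\<in>G. (exp (- lam j * t) * (x \<bullet> p j)) *\<^sub>R p j)"
  have "op_sgrp lam p t x \<bullet> ?Y = Z \<bullet> ?Y"
    using G by (simp add: Z_def inner_sum_right inner_op_sgrp[OF p t lam] inner_sum_p)
  also have "\<dots> \<le> norm Z * norm ?Y"
    by (rule norm_cauchy_schwarz)
  also have "norm Z \<le> exp (- mu * t) * norm x"
  proof -
    have "(norm Z)\<^sup>2 = (\<Sum>j\<in>G. (exp (- lam j * t) * (x \<bullet> p j))\<^sup>2)"
      unfolding Z_def using G by (rule norm_sum_p_sq)
    also have "\<dots> \<le> (\<Sum>j\<in>G. (exp (- mu * t))\<^sup>2 * (x \<bullet> p j)\<^sup>2)"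
      using mu t by (intro sum_mono) (simp add: power_mult_distrib mult_right_mono power_mono)
    also have "\<dots> \<le> (exp (- mu * t))\<^sup>2 * (norm x)\<^sup>2"
      unfolding sum_distrib_left[symmetric] using G by (intro mult_left_mono bessel_inequality) auto
    finally show ?thesis
      by (simp add: power_mult_distrib[symmetric] power2_le_iff_abs_le)
  qed
  finally show ?thesis
    by (simp add: mult_right_mono)
qed

lemma duhamel_block_bound:
  fixes p :: "nat \<Rightarrow> 'b::{real_inner,complete_space}"
  assumes p: "orthonormal_seq p" and lam: "\<And>j. 0 \<le> lam j" and t: "0 \<le> t"
    and duhamel: "((\<lambda>s. op_sgrp lam p (t - s) (F s)) has_integral (a - op_sgrp lam p t b)) {0..t}"
    and F: "\<And>s. s \<in> {0..t} \<Longrightarrow> norm (F s) \<le> K"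
    and G: "finite G" and mu: "0 < mu" "\<And>j. j \<in> G \<Longrightarrow> mu \<le> lam j"
  shows "(\<Sum>j\<in>G. (a \<bullet> p j - exp (- lam j * t) * (b \<bullet> p j))\<^sup>2) \<le> (K / mu)\<^sup>2"
proof -
  interpret orthonormal_seq p by (fact p)
  \<comment> \<open>Pair the variation of constants formula with the block component \<open>Y\<close> of its left-hand side.\<close>
  define Y where "Y = (\<Sum>j\<in>G. (a \<bullet> p j - exp (- lam j * t) * (b \<bullet> p j)) *\<^sub>R p j)"
  have "0 \<le> K"
    using F[of 0] t by (meson atLeastAtMost_iff norm_ge_zero order_trans order_refl)
  have norm_Y: "(norm Y)\<^sup>2 = (\<Sum>j\<in>G. (a \<bullet> p j - exp (- lam j * t) * (b \<bullet> p j))\<^sup>2)"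
    unfolding Y_def using G by (rule norm_sum_p_sq)
  have "(a - op_sgrp lam p t b) \<bullet> Y = (norm Y)\<^sup>2"
    unfolding norm_Y using G
    by (simp add: Y_def inner_sum_right inner_diff_left inner_op_sgrp[OF p t lam] power2_eq_square)
  moreover have "((\<lambda>s. op_sgrp lam p (t - s) (F s) \<bullet> Y) has_integral ((a - op_sgrp lam p t b) \<bullet> Y)) {0..t}"
    using has_integral_linear[OF duhamel bounded_linear_inner_left[of Y]] by (simp add: o_def)
  moreover have "op_sgrp lam p (t - s) (F s) \<bullet> Y \<le> norm Y * K * exp (- mu * (t - s))"
    if "s \<in> {0..t}" for s
  proof -
    have "op_sgrp lam p (t - s) (F s) \<bullet> Y \<le> exp (- mu * (t - s)) * norm (F s) * norm Y"
      unfolding Y_def using that by (intro inner_op_sgrp_sum_le[OF p lam _ G mu(2)]) auto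
    also have "\<dots> \<le> exp (- mu * (t - s)) * K * norm Y"
      using F[OF that] by (simp add: mult_right_mono)
    finally show ?thesis
      by (simp add: mult_ac)
  qed
  ultimately have "(norm Y)\<^sup>2 \<le> norm Y * K / mu - norm Y * K / mu * exp (- mu * t)"
    using has_integral_le[OF _ has_integral_exp_decay[OF mu(1) t]] by fastforce
  also have "\<dots> \<le> norm Y * (K / mu)"
    using \<open>0 \<le> K\<close> mu(1) by simp
  finally have "norm Y * norm Y \<le> norm Y * (K / mu)"
    by (simp add: power2_eq_square)
  then have "norm Y \<le> K / mu"
    using \<open>0 \<le> K\<close> mu(1) by (smt (verit) mult_le_cancel_left_pos norm_ge_zero divide_nonneg_pos)
  then show ?thesis
    using norm_Y by (metis norm_ge_zero power_mono)
qed

lemma L2_set_op_sgrp_tail_le: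
  assumes lam: "strict_mono lam" and t: "0 \<le> t" and b: "in_Xalpha lam p alpha b"
  shows "L2_set (\<lambda>j. lam j powr alpha * (exp (- lam j * t) * (b \<bullet> p j))) {n..<m}
    \<le> exp (- lam n * t) * alpha_norm lam p alpha b"
proof -
  have "(\<Sum>j\<in>{n..<m}. (lam j powr alpha * (exp (- lam j * t) * (b \<bullet> p j)))\<^sup>2)
      \<le> (\<Sum>j\<in>{n..<m}. (exp (- lam n * t))\<^sup>2 * (lam j powr alpha * (b \<bullet> p j))\<^sup>2)"
  proof (intro sum_mono)
    fix j assume "j \<in> {n..<m}"
    then have "exp (- lam j * t) \<le> exp (- lam n * t)"
      using t lam by (simp add: mult_right_mono strict_mono_less_eq)
    then have "(exp (- lam j * t))\<^sup>2 \<le> (exp (- lam n * t))\<^sup>2"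
      by (simp add: power_mono)
    moreover have "(lam j powr alpha * (exp (- lam j * t) * (b \<bullet> p j)))\<^sup>2
        = (exp (- lam j * t))\<^sup>2 * (lam j powr alpha * (b \<bullet> p j))\<^sup>2"
      by (simp add: power_mult_distrib)
    ultimately show "(lam j powr alpha * (exp (- lam j * t) * (b \<bullet> p j)))\<^sup>2
        \<le> (exp (- lam n * t))\<^sup>2 * (lam j powr alpha * (b \<bullet> p j))\<^sup>2"
      by (metis mult_right_mono zero_le_power2)
  qed
  also have "\<dots> \<le> (exp (- lam n * t))\<^sup>2 * (\<Sum>j. (lam j powr alpha * (b \<bullet> p j))\<^sup>2)"
    unfolding sum_distrib_left[symmetric] using b unfolding in_Xalpha_def
    by (intro mult_left_mono sum_le_suminf) auto
  also have "\<dots> = (exp (- lam n * t) * alpha_norm lam p alpha b)\<^sup>2"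
    by (simp add: alpha_norm_sq[OF b] power_mult_distrib)
  finally show ?thesis
    unfolding L2_set_def using alpha_norm_nonneg[OF b] by (intro real_le_lsqrt) auto
qed

lemma L2_set_duhamel_tail_le:
  fixes p :: "nat \<Rightarrow> 'b::{real_inner,complete_space}"
  assumes p: "orthonormal_seq p" and lam: "strict_mono lam" "0 < lam 0"
    and alpha: "0 \<le> alpha" "alpha < 1"
    and f: "\<And>v. in_Xalpha lam p alpha v \<Longrightarrow> norm (f v) \<le> K"
    and u: "mild_sol lam p alpha f b u" and t: "0 \<le> t"
  shows "L2_set (\<lambda>j. lam j powr alpha * (u t \<bullet> p j - exp (- lam j * t) * (b \<bullet> p j))) {n..<m}
    \<le> sqrt (dyadic_const alpha) * K * lam n powr (alpha - 1)"
proof -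
  have lam_pos: "0 < lam j" for j
    using pos_of_strict_mono[OF lam] .
  have "0 \<le> K"
    using f[OF in_Xalpha_0] norm_ge_zero order_trans by blast
  have uX: "\<And>s. 0 \<le> s \<Longrightarrow> in_Xalpha lam p alpha (u s)"
    and duhamel: "((\<lambda>s. op_sgrp lam p (t - s) (f (u s))) has_integral (u t - op_sgrp lam p t b)) {0..t}"
    using u t unfolding mild_sol_def by auto
  have "(\<Sum>j\<in>{n..<m}. (lam j powr alpha * (u t \<bullet> p j - exp (- lam j * t) * (b \<bullet> p j)))\<^sup>2)
      \<le> dyadic_const alpha * K\<^sup>2 * (lam n powr (alpha - 1))\<^sup>2"
    using lam_pos lam(1)
    by (intro dyadic_weighted_sum_le alpha duhamel_block_bound[OF p _ t duhamel])
      (auto intro: f uX finite_subset less_imp_le simp: strict_mono_less_eq)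
  then show ?thesis
    unfolding L2_set_def using \<open>0 \<le> K\<close> dyadic_const_nonneg[OF alpha(2)]
    by (intro real_le_lsqrt) (simp_all add: power_mult_distrib)
qed

lemma alpha_norm_tail_mild_sol_le:
  fixes p :: "nat \<Rightarrow> 'b::{real_inner,complete_space}"
  assumes p: "orthonormal_seq p" and lam: "strict_mono lam" "0 < lam 0"
    and alpha: "0 \<le> alpha" "alpha < 1"
    and f: "\<And>v. in_Xalpha lam p alpha v \<Longrightarrow> norm (f v) \<le> K"
    and u: "mild_sol lam p alpha f b u" and t: "0 \<le> t"
  shows "alpha_norm lam p alpha (u t - proj_first p n (u t))
    \<le> sqrt (dyadic_const alpha) * K * lam n powr (alpha - 1)
      + exp (- lam n * t) * alpha_norm lam p alpha b"
    (is "_ \<le> ?B1 + ?B2")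
proof -
  interpret orthonormal_seq p by (fact p)
  have b: "in_Xalpha lam p alpha b" and ut: "in_Xalpha lam p alpha (u t)"
    using u t unfolding mild_sol_def by auto
  show ?thesis
  proof (rule alpha_norm_le_of_partial_sums)
    show "in_Xalpha lam p alpha (u t - proj_first p n (u t))"
      using ut by (intro in_Xalpha_diff in_Xalpha_proj_first)
    show "0 \<le> ?B1 + ?B2"
      using L2_set_duhamel_tail_le[OF p lam alpha f u t, of n n] alpha_norm_nonneg[OF b] by simp
    fix m
    let ?d = "\<lambda>j. lam j powr alpha * (u t \<bullet> p j - exp (- lam j * t) * (b \<bullet> p j))"
    let ?e = "\<lambda>j. lam j powr alpha * (exp (- lam j * t) * (b \<bullet> p j))"
    have "(\<Sum>j<m. (lam j powr alpha * ((u t - proj_first p n (u t)) \<bullet> p j))\<^sup>2)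
        = (\<Sum>j\<in>{n..<m}. (lam j powr alpha * (u t \<bullet> p j))\<^sup>2)"
      by (rule sum.mono_neutral_cong_right) (auto simp: inner_diff_left inner_proj_first)
    also have "\<dots> = (L2_set (\<lambda>j. ?d j + ?e j) {n..<m})\<^sup>2"
      unfolding L2_set_def by (simp add: sum_nonneg algebra_simps)
    also have "\<dots> \<le> (?B1 + ?B2)\<^sup>2"
      using L2_set_duhamel_tail_le[OF p lam alpha f u t] L2_set_op_sgrp_tail_le[OF lam(1) t b]
      by (intro power_mono L2_set_nonneg order.trans[OF L2_set_triangle_ineq] add_mono)
    finally show "(\<Sum>j<m. (lam j powr alpha * ((u t - proj_first p n (u t)) \<bullet> p j))\<^sup>2)
        \<le> (?B1 + ?B2)\<^sup>2" .
  qed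
qed

lemma global_attractor_subset:
  "global_attractor N S sol A \<Longrightarrow> a \<in> A \<Longrightarrow> S a"
  unfolding global_attractor_def by (elim conjE) blast

lemma global_attractor_backward:
  "global_attractor N S sol A \<Longrightarrow> a \<in> A \<Longrightarrow> 0 \<le> t \<Longrightarrow> \<exists>b\<in>A. \<exists>u. sol b u \<and> u t = a"
  unfolding global_attractor_def by (elim conjE) blast

lemma global_attractor_seq_compact:
  fixes x :: "nat \<Rightarrow> 'x::real_vector"
  assumes "global_attractor N S sol A" "\<forall>k. x k \<in> A"
  shows "\<exists>r a. strict_mono r \<and> a \<in> A \<and> (\<lambda>k. N (x (r k) - a)) \<longlonglongrightarrow> 0"
  using assms unfolding global_attractor_def by (elim conjE) blast

lemma global_attractor_nonempty:
  assumes A: "global_attractor N S sol A" and "S 0"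
  shows "A \<noteq> {}"
proof -
  note attractor = A[unfolded global_attractor_def]
  obtain u where u: "sol 0 u"
    using attractor[THEN conjunct1] \<open>S 0\<close> by blast
  have "{0} \<subseteq> Collect S \<and> (\<exists>K. \<forall>b\<in>{0}. N b \<le> K)"
    using \<open>S 0\<close> by auto
  then obtain T where "\<forall>b\<in>{0}. \<forall>u. sol b u \<longrightarrow> (\<forall>t\<ge>T. \<exists>a\<in>A. N (u t - a) < 1)"
    using attractor[THEN conjunct2, THEN conjunct2, THEN conjunct2, THEN conjunct2, THEN conjunct2]
    by (meson zero_less_one)
  then show ?thesis
    using u by blast
qed

lemma global_attractor_bounded:
  fixes A :: "'x::real_normed_vector set"
  assumes A: "global_attractor norm S sol A"
  shows "bounded A"
proof -
  have "seq_compact A"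
    unfolding seq_compact_def
  proof (intro allI impI)
    fix x :: "nat \<Rightarrow> 'x" assume "\<forall>k. x k \<in> A"
    then obtain r a where "strict_mono r" "a \<in> A" "(\<lambda>k. norm (x (r k) - a)) \<longlonglongrightarrow> 0"
      using global_attractor_seq_compact[OF A] by blast
    then show "\<exists>a\<in>A. \<exists>r. strict_mono r \<and> (x \<circ> r) \<longlonglongrightarrow> a"
      by (auto simp: tendsto_norm_zero_iff LIM_zero_iff o_def)
  qed
  then show ?thesis
    by (intro compact_imp_bounded seq_compact_imp_Heine_Borel)
qed

lemma alpha_norm_tail_attractor_le:
  fixes p :: "nat \<Rightarrow> 'b::{real_inner,complete_space}"
  assumes p: "orthonormal_seq p" and lam: "strict_mono lam" "0 < lam 0"
    and alpha: "0 \<le> alpha" "alpha < 1"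
    and f: "\<And>v. in_Xalpha lam p alpha v \<Longrightarrow> norm (f v) \<le> K"
    and A: "global_attractor (alpha_norm lam p alpha) (in_Xalpha lam p alpha) (mild_sol lam p alpha f) A"
    and R: "\<And>b. b \<in> A \<Longrightarrow> alpha_norm lam p alpha b \<le> R" and a: "a \<in> A"
  shows "alpha_norm lam p alpha (a - proj_first p n a)
    \<le> sqrt (dyadic_const alpha) * K * lam n powr (alpha - 1)"
    (is "?tail \<le> ?c")
proof -
  have "0 < lam n"
    using pos_of_strict_mono[OF lam] .
  then have decay: "((\<lambda>t. exp (- lam n * t)) \<longlongrightarrow> 0) at_top"
    by (intro filterlim_compose[OF exp_at_bot])
      (auto simp: filterlim_uminus_at_bot intro!: filterlim_tendsto_pos_mult_at_top filterlim_ident)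
  have "((\<lambda>t. ?c + exp (- lam n * t) * R) \<longlongrightarrow> ?c) at_top"
    using tendsto_add[OF tendsto_const tendsto_mult_left_zero[OF decay]] by simp
  moreover have "\<forall>\<^sub>F t in at_top. ?tail \<le> ?c + exp (- lam n * t) * R"
    unfolding eventually_at_top_linorder
  proof (intro exI allI impI)
    fix t :: real assume "0 \<le> t"
    then obtain b u where "b \<in> A" and u: "mild_sol lam p alpha f b u" and "u t = a"
      using global_attractor_backward[OF A a] by blast
    have "alpha_norm lam p alpha (u t - proj_first p n (u t))
        \<le> ?c + exp (- lam n * t) * alpha_norm lam p alpha b"
      by (rule alpha_norm_tail_mild_sol_le[OF p lam alpha _ u \<open>0 \<le> t\<close>]) (rule f)
    then have "?tail \<le> ?c + exp (- lam n * t) * alpha_norm lam p alpha b"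
      using \<open>u t = a\<close> by simp
    also have "\<dots> \<le> ?c + exp (- lam n * t) * R"
      using R[OF \<open>b \<in> A\<close>] by simp
    finally show "?tail \<le> ?c + exp (- lam n * t) * R" .
  qed
  ultimately show ?thesis
    using tendsto_le[OF trivial_limit_at_top_linorder _ tendsto_const] by blast
qed

section \<open>Hausdorff distance\<close>

lemma SUP_INF_le_add:
  fixes g h :: "'x \<Rightarrow> 'y \<Rightarrow> real"
  assumes A: "A \<noteq> {}" and B: "B \<noteq> {}"
    and le: "\<And>x y. x \<in> A \<Longrightarrow> y \<in> B \<Longrightarrow> g x y \<le> d + h x y"
    and g: "\<And>x y. x \<in> A \<Longrightarrow> y \<in> B \<Longrightarrow> 0 \<le> g x y"
    and h: "\<And>x y. x \<in> A \<Longrightarrow> y \<in> B \<Longrightarrow> 0 \<le> h x y \<and> h x y \<le> R"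
  shows "(SUP x\<in>A. INF y\<in>B. g x y) \<le> d + (SUP x\<in>A. INF y\<in>B. h x y)"
proof (rule cSUP_least[OF A])
  fix x assume x: "x \<in> A"
  obtain y0 where y0: "y0 \<in> B"
    using B by blast
  have "(INF y\<in>B. g x y) - d \<le> (INF y\<in>B. h x y)"
  proof (rule cINF_greatest[OF B])
    fix y assume y: "y \<in> B"
    have "(INF y\<in>B. g x y) \<le> g x y"
      by (rule cINF_lower[OF _ y]) (use g x in \<open>auto intro!: bdd_belowI2\<close>)
    then show "(INF y\<in>B. g x y) - d \<le> h x y"
      using le[OF x y] by simp
  qed
  also have "(INF y\<in>B. h x y) \<le> (SUP x\<in>A. INF y\<in>B. h x y)"
  proof (rule cSUP_upper[OF x], rule bdd_aboveI2)
    fix x assume "x \<in> A"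
    then have "(INF y\<in>B. h x y) \<le> h x y0"
      by (intro cINF_lower[OF _ y0]) (use h in \<open>auto intro!: bdd_belowI2\<close>)
    then show "(INF y\<in>B. h x y) \<le> R"
      using h[OF \<open>x \<in> A\<close> y0] by simp
  qed
  finally show "(INF y\<in>B. g x y) \<le> d + (SUP x\<in>A. INF y\<in>B. h x y)"
    by simp
qed

lemma hausd_le_add_hausd_image:
  fixes N :: "'b::real_vector \<Rightarrow> real"
  assumes "A \<noteq> {}" "B \<noteq> {}"
    and "\<And>x y. x \<in> A \<Longrightarrow> y \<in> B \<Longrightarrow> N (x - y) \<le> d + N (Q x - y)"
    and "\<And>x y. x \<in> A \<Longrightarrow> y \<in> B \<Longrightarrow> 0 \<le> N (x - y)"
    and "\<And>x y. x \<in> A \<Longrightarrow> y \<in> B \<Longrightarrow> 0 \<le> N (Q x - y) \<and> N (Q x - y) \<le> R"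
  shows "hausd N A B \<le> d + hausd N (Q ` A) B"
proof -
  have "(SUP x\<in>A. INF y\<in>B. N (x - y)) \<le> d + (SUP x\<in>A. INF y\<in>B. N (Q x - y))"
    using assms by (intro SUP_INF_le_add)
  moreover have "(SUP y\<in>B. INF x\<in>A. N (x - y)) \<le> d + (SUP y\<in>B. INF x\<in>A. N (Q x - y))"
    using assms by (intro SUP_INF_le_add)
  ultimately show ?thesis
    unfolding hausd_def image_image by linarith
qed

lemma hausd_alpha_norm_le_add_hausd_image:
  assumes "A \<noteq> {}" "B \<noteq> {}"
    and A: "\<And>a. a \<in> A \<Longrightarrow> in_Xalpha lam p alpha a" "\<And>a. a \<in> A \<Longrightarrow> in_Xalpha lam p alpha (Q a)"
      "\<And>a. a \<in> A \<Longrightarrow> alpha_norm lam p alpha (Q a) \<le> R"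
    and B: "\<And>b. b \<in> B \<Longrightarrow> in_Xalpha lam p alpha b" "\<And>b. b \<in> B \<Longrightarrow> alpha_norm lam p alpha b \<le> R"
    and close: "\<And>a. a \<in> A \<Longrightarrow> alpha_norm lam p alpha (a - Q a) \<le> d"
  shows "hausd (alpha_norm lam p alpha) A B \<le> d + hausd (alpha_norm lam p alpha) (Q ` A) B"
proof (rule hausd_le_add_hausd_image[where R = "2 * R"])
  fix x y assume x: "x \<in> A" and y: "y \<in> B"
  show "alpha_norm lam p alpha (x - y) \<le> d + alpha_norm lam p alpha (Q x - y)"
    using alpha_norm_diff_triangle[OF A(1,2)[OF x] B(1)[OF y]] close[OF x] by simp
  show "0 \<le> alpha_norm lam p alpha (x - y)"
    using A(1)[OF x] B(1)[OF y] by (intro alpha_norm_nonneg in_Xalpha_diff)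
  show "0 \<le> alpha_norm lam p alpha (Q x - y) \<and> alpha_norm lam p alpha (Q x - y) \<le> 2 * R"
    using alpha_norm_diff_le[OF A(2)[OF x] B(1)[OF y]] A(2,3)[OF x] B[OF y]
    by (auto intro: alpha_norm_nonneg in_Xalpha_diff)
qed (use assms in auto)

lemma hausd_attractor_le_add_hausd_proj_first:
  fixes p :: "nat \<Rightarrow> 'b::{real_inner,complete_space}"
  assumes p: "orthonormal_seq p" and lam: "strict_mono lam" "0 < lam 0"
    and alpha: "0 \<le> alpha" "alpha < 1"
    and f: "\<And>v. in_Xalpha lam p alpha v \<Longrightarrow> norm (f v) \<le> K"
    and A: "global_attractor (alpha_norm lam p alpha) (in_Xalpha lam p alpha) (mild_sol lam p alpha f) A"
      "\<And>a. a \<in> A \<Longrightarrow> alpha_norm lam p alpha a \<le> R"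
    and B: "B \<noteq> {}" "\<And>b. b \<in> B \<Longrightarrow> in_Xalpha lam p alpha b"
      "\<And>b. b \<in> B \<Longrightarrow> alpha_norm lam p alpha b \<le> R"
  shows "hausd (alpha_norm lam p alpha) A B
    \<le> sqrt (dyadic_const alpha) * K * lam n powr (alpha - 1)
      + hausd (alpha_norm lam p alpha) (proj_first p n ` A) B"
proof (rule hausd_alpha_norm_le_add_hausd_image[OF _ B(1) _ _ _ B(2,3)])
  interpret orthonormal_seq p by (fact p)
  show "A \<noteq> {}"
    using global_attractor_nonempty[OF A(1) in_Xalpha_0] .
  fix a assume "a \<in> A"
  then show "in_Xalpha lam p alpha a"
    using global_attractor_subset[OF A(1)] by blast
  then show "alpha_norm lam p alpha (proj_first p n a) \<le> R"
    using alpha_norm_proj_first_le A(2)[OF \<open>a \<in> A\<close>] order.trans by blast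
  show "in_Xalpha lam p alpha (proj_first p n a)"
    by (rule in_Xalpha_proj_first)
  show "alpha_norm lam p alpha (a - proj_first p n a)
      \<le> sqrt (dyadic_const alpha) * K * lam n powr (alpha - 1)"
    by (rule alpha_norm_tail_attractor_le[OF p lam alpha _ A \<open>a \<in> A\<close>]) (rule f)
qed

theorem theorem5p3:
  fixes alpha eps0 :: real and n :: nat
    and A0 :: "'a::euclidean_space \<Rightarrow> 'a" and lam0 :: "nat \<Rightarrow> real"
    and lam :: "real \<Rightarrow> nat \<Rightarrow> real" and phi :: "real \<Rightarrow> nat \<Rightarrow> 'b::{real_inner,complete_space}"
    and E :: "real \<Rightarrow> 'a \<Rightarrow> 'b" and M :: "real \<Rightarrow> 'b \<Rightarrow> 'a"
    and tau rho :: "real \<Rightarrow> real"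
    and f0 :: "'a \<Rightarrow> 'a" and f :: "real \<Rightarrow> 'b \<Rightarrow> 'b"
    and Att :: "real \<Rightarrow> 'b set" and Att0 :: "'a set"
  assumes alpha: "0 < alpha" "alpha < 1"
    and eps0: "0 < eps0"
    and dimX0: "DIM('a) = n"
    and A0_lin: "linear A0" and A0_inv: "bij A0"
    and lam0_mono: "\<And>i j. i < j \<Longrightarrow> j < n \<Longrightarrow> lam0 i < lam0 j"
    and lam0_pos: "0 < lam0 0"
    and A0_spec: "{c. \<exists>v. v \<noteq> 0 \<and> A0 v = c *\<^sub>R v} = lam0 ` {..<n}"
    and lam_mono: "\<And>e. e \<in> {0<..eps0} \<Longrightarrow> strict_mono (lam e)"
    and lam_pos: "\<And>e. e \<in> {0<..eps0} \<Longrightarrow> 0 < lam e 0"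
    and lam_infty: "\<And>e. e \<in> {0<..eps0} \<Longrightarrow> filterlim (lam e) at_top sequentially"
    and phi_onb: "\<And>e. e \<in> {0<..eps0} \<Longrightarrow> orthonormal_basis_seq (phi e)"
    and E_lin: "\<And>e. e \<in> {0<..eps0} \<Longrightarrow> linear (E e)"
    and E_range: "\<And>e u. e \<in> {0<..eps0} \<Longrightarrow> in_Xalpha (lam e) (phi e) alpha (E e u)"
    and M_lin: "\<And>e. e \<in> {0<..eps0} \<Longrightarrow> linear (M e)"
    and ME: "\<And>e u. e \<in> {0<..eps0} \<Longrightarrow> M e (E e u) = u"
    and E_norm_lim: "\<And>u. ((\<lambda>e. norm (E e u)) \<longlongrightarrow> norm u) (at_right 0)"
    and EM_bdd: "\<exists>K. \<forall>e\<in>{0<..eps0}. \<forall>u v.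
        alpha_norm (lam e) (phi e) alpha (E e u) \<le> K * norm u \<and> norm (M e v) \<le> K * norm v"
    and res_conv: "\<And>es v w. (\<forall>k. es k \<in> {0<..eps0}) \<Longrightarrow> es \<longlonglongrightarrow> 0 \<Longrightarrow>
        (\<forall>k. in_Xalpha (lam (es k)) (phi (es k)) alpha (v k)) \<Longrightarrow>
        (\<lambda>k. alpha_norm (lam (es k)) (phi (es k)) alpha (v k - E (es k) w)) \<longlonglongrightarrow> 0 \<Longrightarrow>
        (\<lambda>k. alpha_norm (lam (es k)) (phi (es k)) alpha
            (op_inv (lam (es k)) (phi (es k)) (v k) - E (es k) (inv A0 w))) \<longlonglongrightarrow> 0"
    and res_compact: "\<And>es v. (\<forall>k. es k \<in> {0<..eps0}) \<Longrightarrow> es \<longlonglongrightarrow> 0 \<Longrightarrow>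
        (\<forall>k. norm (v k) = 1) \<Longrightarrow>
        \<exists>r w. strict_mono r \<and>
          (\<lambda>k. alpha_norm (lam (es (r k))) (phi (es (r k))) alpha
            (op_inv (lam (es (r k))) (phi (es (r k))) (v (r k)) - E (es (r k)) w)) \<longlonglongrightarrow> 0"
    and tau_mono: "mono_on {0..eps0} tau" and tau0: "tau 0 = 0"
    and rho_mono: "mono_on {0..eps0} rho" and rho0: "rho 0 = 0"
    and tau_est: "\<And>e u. e \<in> {0<..eps0} \<Longrightarrow>
        alpha_norm (lam e) (phi e) alpha (op_inv (lam e) (phi e) u - E e (inv A0 (M e u)))
          \<le> tau e * norm u"
    and rho_est: "\<exists>C. \<forall>e\<in>{0<..eps0}. \<forall>v w. in_Xalpha (lam e) (phi e) alpha v \<longrightarrow>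
        norm (f e v - E e (f0 w)) \<le> C * alpha_norm (lam e) (phi e) alpha (v - E e w) + rho e"
    and f0_C1: "\<exists>D :: 'a \<Rightarrow> 'a \<Rightarrow>\<^sub>L 'a. (\<forall>x. (f0 has_derivative blinfun_apply (D x)) (at x)) \<and> continuous_on UNIV D"
    and f_C1: "\<And>e. e \<in> {0<..eps0} \<Longrightarrow> C1_wrt (in_Xalpha (lam e) (phi e) alpha) (alpha_norm (lam e) (phi e) alpha) (f e)"
    and f_bdd: "\<exists>K. (\<forall>x. norm (f0 x) \<le> K) \<and>
        (\<forall>e\<in>{0<..eps0}. \<forall>v. in_Xalpha (lam e) (phi e) alpha v \<longrightarrow> norm (f e v) \<le> K)"
    and f_lip: "\<exists>L. (\<forall>x y. norm (f0 x - f0 y) \<le> L * norm (x - y)) \<and>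
        (\<forall>e\<in>{0<..eps0}. \<forall>v w. in_Xalpha (lam e) (phi e) alpha v \<longrightarrow> in_Xalpha (lam e) (phi e) alpha w \<longrightarrow>
           norm (f e v - f e w) \<le> L * alpha_norm (lam e) (phi e) alpha (v - w))"
    and Att_attr: "\<And>e. e \<in> {0<..eps0} \<Longrightarrow>
        global_attractor (alpha_norm (lam e) (phi e) alpha) (in_Xalpha (lam e) (phi e) alpha)
          (mild_sol (lam e) (phi e) alpha (f e)) (Att e)"
    and Att_bdd: "\<exists>K. \<forall>e\<in>{0<..eps0}. \<forall>a\<in>Att e. alpha_norm (lam e) (phi e) alpha a \<le> K"
    and Att0_attr: "global_attractor norm (\<lambda>_. True) (ode_sol A0 f0) Att0"
  shows "\<exists>C>0. \<forall>e\<in>{0<..eps0}.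
      hausd (alpha_norm (lam e) (phi e) alpha) (Att e) (E e ` Att0)
        \<le> C * (tau e + rho e)
          + hausd (alpha_norm (lam e) (phi e) alpha) (proj_first (phi e) n ` Att e) (E e ` Att0)"
proof -
  obtain K where K: "\<And>e v. e \<in> {0<..eps0} \<Longrightarrow> in_Xalpha (lam e) (phi e) alpha v \<Longrightarrow> norm (f e v) \<le> K"
    using f_bdd by blast
  obtain Ka where Ka: "\<And>e a. e \<in> {0<..eps0} \<Longrightarrow> a \<in> Att e \<Longrightarrow> alpha_norm (lam e) (phi e) alpha a \<le> Ka"
    using Att_bdd by blast
  obtain KE where KE: "\<And>e u. e \<in> {0<..eps0} \<Longrightarrow> alpha_norm (lam e) (phi e) alpha (E e u) \<le> KE * norm u"
    using EM_bdd by blast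
  obtain R0 where R0: "\<And>w. w \<in> Att0 \<Longrightarrow> norm w \<le> R0"
    using global_attractor_bounded[OF Att0_attr] by (auto simp: bounded_iff)
  define C where "C = max 1 (sqrt (dyadic_const alpha) * K)"
  have "hausd (alpha_norm (lam e) (phi e) alpha) (Att e) (E e ` Att0)
      \<le> C * (tau e + rho e)
        + hausd (alpha_norm (lam e) (phi e) alpha) (proj_first (phi e) n ` Att e) (E e ` Att0)"
    if e: "e \<in> {0<..eps0}" for e
  proof -
    have p: "orthonormal_seq (phi e)"
      using phi_onb[OF e] by (rule orthonormal_basis_seq_imp_orthonormal_seq)
    have "lam e n powr (alpha - 1) \<le> tau e"
      using dimX0 by (intro eigenvalue_powr_le_of_resolvent_estimate[OF p lam_mono[OF e] lam_pos[OF e]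
          alpha(2) M_lin[OF e] _ E_lin[OF e] A0_lin A0_inv tau_est[OF e]]) simp
    moreover have "0 \<le> rho e"
      using e rho0 mono_onD[OF rho_mono, of 0 e] by auto
    moreover have "alpha_norm (lam e) (phi e) alpha (E e w) \<le> \<bar>KE\<bar> * R0" if "w \<in> Att0" for w
      using KE[OF e, of w] R0[OF that] abs_ge_self[of KE]
      by (meson abs_ge_zero mult_left_mono mult_right_mono norm_ge_zero order.trans)
    then have "hausd (alpha_norm (lam e) (phi e) alpha) (Att e) (E e ` Att0)
        \<le> sqrt (dyadic_const alpha) * K * lam e n powr (alpha - 1)
          + hausd (alpha_norm (lam e) (phi e) alpha) (proj_first (phi e) n ` Att e) (E e ` Att0)"
      using alpha K[OF e] Ka[OF e] E_range[OF e] global_attractor_nonempty[OF Att0_attr]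
      by (intro hausd_attractor_le_add_hausd_proj_first[OF p lam_mono[OF e] lam_pos[OF e] _ _ _
          Att_attr[OF e], where R = "max Ka (\<bar>KE\<bar> * R0)"]) (auto intro: max.coboundedI1 max.coboundedI2)
    moreover have "sqrt (dyadic_const alpha) * K * x \<le> C * x" if "0 \<le> x" for x
      using that by (intro mult_right_mono) (auto simp: C_def)
    ultimately show ?thesis
      by (smt (verit) C_def max.cobounded1 mult_left_mono powr_ge_zero)
  qed
  then show ?thesis
    by (intro exI[of _ C]) (auto simp: C_def)
qed

end
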